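(* Let $L_0$ be the boundary value problem on the tree $G$ (with $m$ edges and boundary conditions BC) with all potentials and all constants equal to zero, i.e. $\sigma_j\equiv 0$ and $\gamma_j=0$ for $j=1,\dots,m$, and let $\Delta_0(\lambda)$ be its characteristic function. Then $$\Delta_0(\lambda)=\rho^{1-d}\,R_m(\sin\rho\pi,\cos\rho\pi),$$ where $d$ is the number of Dirichlet conditions among BC and $R_m$ is a polynomial in two variables of degree $m$. Moreover, $$R_m(\sin\rho\pi,\cos\rho\pi)=\begin{cases}\sin\rho\pi\, Q_{m-1}(\cos\rho\pi), & d \text{ even},\\ Q_m(\cos\rho\pi), & d\text{ odd},\end{cases}$$ where $Q_k$ ($k=m-1$ or $k=m$) is a polynomial of degree $k$ satisfying $Q_k(z)=(-1)^kQ_k(-z)$.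
   Context: Let $G$ be a finite tree with vertex set $V$ and edges $e_1,\dots,e_m$ ($m\ge1$), all of length $\pi$. For $v\in V$ let $E_v$ be the set of edges incident to $v$. Vertices of degree $1$ are boundary vertices (set $\partial G$), the others are internal (set $\mathrm{int}\,G$). Each edge $e_j$ is parametrized by $x_j\in[0,\pi]$, the values $0$ and $\pi$ corresponding to its two endpoints. Let $\sigma_j\in L_2(0,\pi)$ be real-valued and $\gamma_j\in\mathbb R$, $j=1,\dots,m$. Put $y_j^{[1]}=y_j'-\sigma_jy_j$ (quasi-derivative) and $\ell_jy_j=-(y_j^{[1]})'-\sigma_jy_j^{[1]}-\sigma_j^2y_j$ on the domain $\{y_j\in W_2^1[0,\pi]: y_j^{[1]}\in W_1^1[0,\pi],\ \ell_jy_j\in L_2(0,\pi)\}$ (this realizes $-y_j''+q_jy_j$ with $q_j=\sigma_j'\in W_2^{-1}(0,\pi)$). If a vertex $u$ corresponds to $x_j=0$ put $y_j(u)=y_j(0)$, $y_j^{[1]}(u)=-y_j^{[1]}(0)$; if $v$ corresponds to $x_j=\pi$ put $y_j(v)=y_j(\pi)$, $y_j^{[1]}(v)=y_j^{[1]}(\pi)+\gamma_jy_j(\pi)$. The problem $L$: $\ell_jy_j=\lambda y_j$ on $(0,\pi)$, $j=1,\dots,m$, with, at each internal vertex $v$, $y_j(v)=y_k(v)$ for $e_j,e_k\in E_v$ and $\sum_{e_j\in E_v}y_j^{[1]}(v)=0$, and at each boundary vertex either the Dirichlet condition $y(v)=0$ or the Neumann condition $y^{[1]}(v)=0$ (a fixed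 choice, called BC). Let $C_j(x,\lambda),S_j(x,\lambda)$ solve $\ell_jy=\lambda y$ with $C_j(0)=S_j^{[1]}(0)=1$, $C_j^{[1]}(0)=S_j(0)=0$. The characteristic function $\Delta(\lambda)$ is defined recursively: (i) if $m=1$: for $y_1(0)=y_1(\pi)=0$, $\Delta=S_1(\pi,\lambda)$; for $y_1(0)=y_1^{[1]}(\pi)=0$, $\Delta=S_1^{[1]}(\pi,\lambda)+\gamma_1S_1(\pi,\lambda)$; for $y_1^{[1]}(0)=y_1(\pi)=0$, $\Delta=C_1(\pi,\lambda)$; for $y_1^{[1]}(0)=y_1^{[1]}(\pi)=0$, $\Delta=C_1^{[1]}(\pi,\lambda)+\gamma_1C_1(\pi,\lambda)$. (ii) if $m>1$: pick an internal vertex $u$ of degree $s$; splitting $G$ at $u$ gives subtrees $G_1,\dots,G_s$ (each containing one edge of $E_u$, $u$ being a boundary vertex of each); let $\Delta_j^D,\Delta_j^N$ be the characteristic functions of the analogous problems on $G_j$ with the Dirichlet, resp. Neumann, condition at $u$, the same matching conditions at internal vertices and BC at the other boundary vertices; then $\Delta=\sum_{j=1}^s\Delta_j^N\prod_{k\ne j}\Delta_k^D$ (independent of the choice of $u$). Throughout, $\rho=\sqrt\lambda$ with $\mathrm{Re}\,\rho\ge0$. *)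

theory Defs
  imports Complex_Main "HOL-Computational_Algebra.Polynomial"
begin

text \<open>A tree with edges 0..<m; edge j runs from vertex src j (x_j = 0) to vertex tgt j (x_j = pi).\<close>

definition tree_vertices :: "nat \<Rightarrow> (nat \<Rightarrow> 'v) \<Rightarrow> (nat \<Rightarrow> 'v) \<Rightarrow> 'v set" where
  "tree_vertices m src tgt = src ` {..<m} \<union> tgt ` {..<m}"

definition is_tree :: "nat \<Rightarrow> (nat \<Rightarrow> 'v) \<Rightarrow> (nat \<Rightarrow> 'v) \<Rightarrow> bool" where
  "is_tree m src tgt \<longleftrightarrow>
     m \<ge> 1 \<and> (\<forall>j<m. src j \<noteq> tgt j) \<and>
     card (tree_vertices m src tgt) = m + 1 \<and>
     (\<forall>v \<in> tree_vertices m src tgt. \<forall>w \<in> tree_vertices m src tgt.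
        (v, w) \<in> ({(src j, tgt j) | j. j < m} \<union> {(tgt j, src j) | j. j < m})\<^sup>*)"

definition inc_edges :: "(nat \<Rightarrow> 'v) \<Rightarrow> (nat \<Rightarrow> 'v) \<Rightarrow> nat set \<Rightarrow> 'v \<Rightarrow> nat set" where
  "inc_edges src tgt E v = {j \<in> E. src j = v \<or> tgt j = v}"

definition deg :: "(nat \<Rightarrow> 'v) \<Rightarrow> (nat \<Rightarrow> 'v) \<Rightarrow> nat set \<Rightarrow> 'v \<Rightarrow> nat" where
  "deg src tgt E v = card (inc_edges src tgt E v)"

definition branch :: "(nat \<Rightarrow> 'v) \<Rightarrow> (nat \<Rightarrow> 'v) \<Rightarrow> nat set \<Rightarrow> 'v \<Rightarrow> nat \<Rightarrow> nat set" where
  "branch src tgt E u j = {k. (j, k) \<in> {(a, b). a \<in> E \<and> b \<in> E \<and>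
        (\<exists>w. w \<noteq> u \<and> w \<in> {src a, tgt a} \<and> w \<in> {src b, tgt b})}\<^sup>*}"

text \<open>Solutions C, S of -y'' = lambda y (zero potential), C(0)=S'(0)=1, C'(0)=S(0)=0, and their
  (quasi-)derivatives, at x = pi; rho = csqrt lambda (Re rho \<ge> 0).\<close>
definition C0 :: "complex \<Rightarrow> complex" where "C0 lam = cos (csqrt lam * pi)"
definition C0' :: "complex \<Rightarrow> complex" where "C0' lam = - csqrt lam * sin (csqrt lam * pi)"
definition S0 :: "complex \<Rightarrow> complex" where
  "S0 lam = (if lam = 0 then of_real pi else sin (csqrt lam * pi) / csqrt lam)"
definition S0' :: "complex \<Rightarrow> complex" where "S0' lam = cos (csqrt lam * pi)"

text \<open>Characteristic function of the zero-potential problem (sigma = 0, gamma = 0) on the subtree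
  with edge set E, with boundary condition b v (True = Dirichlet, False = Neumann) at boundary
  vertices. Any Delta obtained by the recursive definition (with any choice of splitting vertex)
  satisfies char0.\<close>
inductive char0 :: "(nat \<Rightarrow> 'v) \<Rightarrow> (nat \<Rightarrow> 'v) \<Rightarrow> nat set \<Rightarrow> ('v \<Rightarrow> bool) \<Rightarrow> (complex \<Rightarrow> complex) \<Rightarrow> bool"
  for src tgt where
  single: "char0 src tgt {j} b
     (if b (src j) then (if b (tgt j) then S0 else S0') else (if b (tgt j) then C0 else C0'))"
| split: "\<lbrakk> deg src tgt E u \<ge> 2;
            \<forall>j \<in> inc_edges src tgt E u.
               char0 src tgt (branch src tgt E u j) (b(u := True)) (DD j) \<and>
               char0 src tgt (branch src tgt E u j) (b(u := False)) (DN j) \<rbrakk>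
         \<Longrightarrow> char0 src tgt E b (\<lambda>lam. \<Sum>j \<in> inc_edges src tgt E u.
                 DN j lam * (\<Prod>k \<in> inc_edges src tgt E u - {j}. DD k lam))"

definition bipoly_degree :: "(nat \<Rightarrow> nat \<Rightarrow> real) \<Rightarrow> nat \<Rightarrow> bool" where
  "bipoly_degree c n \<longleftrightarrow> (\<forall>i j. c i j \<noteq> 0 \<longrightarrow> i + j \<le> n) \<and> (\<exists>i j. c i j \<noteq> 0 \<and> i + j = n)"

definition bipoly_eval :: "(nat \<Rightarrow> nat \<Rightarrow> real) \<Rightarrow> nat \<Rightarrow> complex \<Rightarrow> complex \<Rightarrow> complex" where
  "bipoly_eval c n x y = (\<Sum>i\<le>n. \<Sum>j\<le>n. of_real (c i j) * x ^ i * y ^ j)"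

end

theory Submission
  imports Defs
begin

(* Every characteristic function D of a subtree with n edges and c Dirichlet vertices has the form
   rho^k sin(rho pi)^[k odd] Q(cos(rho pi)) with k = 1 - c, Q real, deg Q = n - [k odd] and
   Q(-z) = (-1)^(deg Q) Q(z).  This holds for the four one-edge problems, and the recursion only
   multiplies such forms (exponents and edge numbers add, and sin^2 = 1 - cos^2) and adds forms of
   the same shape.  A sum could lose degree; this is excluded because all leading coefficients have
   the sign that makes D(-t^2) positive for large t.  On the combinatorial side, splitting a tree at
   a vertex u of degree at least 2 partitions the edges and the Dirichlet vertices among the
   branches, and u is a Dirichlet vertex of a branch exactly in the problem with the Dirichlet
   condition at u. *)

section \<open>Sine-cosine forms\<close>

lemma map_poly_of_real_add:
  "map_poly (of_real :: real \<Rightarrow> 'a::real_algebra_1) (p + q) = map_poly of_real p + map_poly of_real q"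
  by (intro poly_eqI) (simp add: coeff_map_poly)

lemma map_poly_of_real_mult:
  "map_poly (of_real :: real \<Rightarrow> 'a::{real_algebra_1, comm_ring_1}) (p * q) =
     map_poly of_real p * map_poly of_real q"
proof (induction p)
  case (pCons a p)
  have "map_poly (of_real :: real \<Rightarrow> 'a) (smult a q) = smult (of_real a) (map_poly of_real q)"
    by (intro poly_eqI) (simp add: coeff_map_poly)
  then show ?case
    using pCons by (simp add: mult_pCons_left map_poly_of_real_add map_poly_pCons)
qed simp

lemma poly_mult_reflect:
  fixes P Q :: "real poly"
  assumes "\<And>z. poly P z = (-1) ^ a * poly P (- z)" and "\<And>z. poly Q z = (-1) ^ b * poly Q (- z)"
  shows "poly (P * Q) z = (-1) ^ (a + b) * poly (P * Q) (- z)"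
  using assms[of z] by (simp add: power_add)

(* imag_sign k = i^(k + [k odd]) is the sign of rho^k sin(rho pi)^[k odd] at rho = i t, t > 0.
   As cos(i t pi) = cosh(t pi) tends to infinity, the sign condition in sincos_form says that
   D(-t^2) > 0 for large t, so that sums of such functions cannot cancel their leading terms. *)
definition imag_sign :: "int \<Rightarrow> real" where
  "imag_sign k = (if even ((k + of_bool (odd k)) div 2) then 1 else -1)"

lemma imag_sign_add:
  "imag_sign (k + l) = (if odd k \<and> odd l then -1 else 1) * imag_sign k * imag_sign l"
  unfolding imag_sign_def by simp presburger

definition sincos_fun :: "int \<Rightarrow> real poly \<Rightarrow> complex \<Rightarrow> complex" where
  "sincos_fun k Q lam = csqrt lam powi k * (if odd k then sin (csqrt lam * pi) else 1) *
     poly (map_poly of_real Q) (cos (csqrt lam * pi))"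

lemma sincos_fun_add: "sincos_fun k P lam + sincos_fun k Q lam = sincos_fun k (P + Q) lam"
  unfolding sincos_fun_def map_poly_of_real_add by (simp add: algebra_simps)

lemma sincos_fun_mult:
  assumes "lam \<noteq> 0"
  shows "sincos_fun k P lam * sincos_fun l Q lam =
    sincos_fun (k + l) ((if odd k \<and> odd l then [:1, 0, -1:] else 1) * P * Q) lam"
proof -
  have "sin (csqrt lam * pi) * sin (csqrt lam * pi) = 1 - cos (csqrt lam * pi) ^ 2"
    using sin_cos_squared_add[of "csqrt lam * pi"] by (simp add: algebra_simps power2_eq_square)
  then show ?thesis
    using assms unfolding sincos_fun_def map_poly_of_real_mult
    by (auto simp: power_int_add map_poly_pCons power2_eq_square algebra_simps)
qed

definition sincos_form :: "(complex \<Rightarrow> complex) \<Rightarrow> nat \<Rightarrow> int \<Rightarrow> bool" where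
  "sincos_form D n k \<longleftrightarrow> (\<exists>Q :: real poly.
      degree Q + of_bool (odd k) = n \<and> (\<forall>z. poly Q z = (-1) ^ degree Q * poly Q (- z)) \<and>
      lead_coeff Q * imag_sign k > 0 \<and> (\<forall>lam. lam \<noteq> 0 \<longrightarrow> D lam = sincos_fun k Q lam))"

lemma sincos_form_mult:
  assumes "sincos_form D n k" and "sincos_form F n' l"
  shows "sincos_form (\<lambda>lam. D lam * F lam) (n + n') (k + l)"
proof -
  obtain P where P: "degree P + of_bool (odd k) = n" "\<And>z. poly P z = (-1) ^ degree P * poly P (- z)"
    "lead_coeff P * imag_sign k > 0" "\<And>lam. lam \<noteq> 0 \<Longrightarrow> D lam = sincos_fun k P lam"
    using assms(1) unfolding sincos_form_def by blast
  obtain Q where Q: "degree Q + of_bool (odd l) = n'" "\<And>z. poly Q z = (-1) ^ degree Q * poly Q (- z)"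
    "lead_coeff Q * imag_sign l > 0" "\<And>lam. lam \<noteq> 0 \<Longrightarrow> F lam = sincos_fun l Q lam"
    using assms(2) unfolding sincos_form_def by blast
  define S :: "real poly" where "S = (if odd k \<and> odd l then [:1, 0, -1:] else 1)"
  have "S \<noteq> 0" "P \<noteq> 0" "Q \<noteq> 0"
    using P(3) Q(3) by (auto simp: S_def)
  then have deg: "degree (S * P * Q) = degree S + degree P + degree Q"
    by (simp add: degree_mult_eq)
  have "degree S = 2 * of_bool (odd k \<and> odd l)" "\<And>z. poly S z = (-1) ^ degree S * poly S (- z)"
    by (simp_all add: S_def)
  then have reflect: "poly (S * P * Q) z = (-1) ^ degree (S * P * Q) * poly (S * P * Q) (- z)" for z
    unfolding deg by (intro poly_mult_reflect P(2) Q(2))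
  have "lead_coeff (S * P * Q) * imag_sign (k + l) =
      (lead_coeff P * imag_sign k) * (lead_coeff Q * imag_sign l)"
    by (simp add: S_def lead_coeff_mult imag_sign_add)
  then have "lead_coeff (S * P * Q) * imag_sign (k + l) > 0"
    using P(3) Q(3) by simp
  moreover have "degree (S * P * Q) + of_bool (odd (k + l)) = n + n'"
    using P(1) Q(1) deg \<open>degree S = _\<close> by auto
  moreover have "D lam * F lam = sincos_fun (k + l) (S * P * Q) lam" if "lam \<noteq> 0" for lam
    using P(4) Q(4) sincos_fun_mult[OF that, of k P l Q] that by (simp add: S_def)
  ultimately show ?thesis
    unfolding sincos_form_def using reflect by blast
qed

lemma sincos_form_add:
  assumes "sincos_form D n k" and "sincos_form F n k"
  shows "sincos_form (\<lambda>lam. D lam + F lam) n k"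
proof -
  obtain P where P: "degree P + of_bool (odd k) = n" "\<And>z. poly P z = (-1) ^ degree P * poly P (- z)"
    "lead_coeff P * imag_sign k > 0" "\<And>lam. lam \<noteq> 0 \<Longrightarrow> D lam = sincos_fun k P lam"
    using assms(1) unfolding sincos_form_def by blast
  obtain Q where Q: "degree Q + of_bool (odd k) = n" "\<And>z. poly Q z = (-1) ^ degree Q * poly Q (- z)"
    "lead_coeff Q * imag_sign k > 0" "\<And>lam. lam \<noteq> 0 \<Longrightarrow> F lam = sincos_fun k Q lam"
    using assms(2) unfolding sincos_form_def by blast
  have deg_eq: "degree Q = degree P"
    using P(1) Q(1) by simp
  have lead: "coeff (P + Q) (degree P) * imag_sign k > 0"
    using P(3) Q(3) deg_eq by (simp add: distrib_right)
  have deg: "degree (P + Q) = degree P"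
  proof (rule antisym)
    show "degree (P + Q) \<le> degree P"
      using degree_add_le[of P "degree P" Q] deg_eq by simp
    show "degree P \<le> degree (P + Q)"
      using lead by (intro le_degree) (metis mult_zero_left less_irrefl)
  qed
  have "poly (P + Q) z = (-1) ^ degree (P + Q) * poly (P + Q) (- z)" for z
    using P(2)[of z] Q(2)[of z] deg deg_eq by (simp add: algebra_simps)
  moreover have "D lam + F lam = sincos_fun k (P + Q) lam" if "lam \<noteq> 0" for lam
    using P(4) Q(4) that by (simp add: sincos_fun_add)
  moreover have "degree (P + Q) + of_bool (odd k) = n" "lead_coeff (P + Q) * imag_sign k > 0"
    using P(1) deg lead by simp_all
  ultimately show ?thesis
    unfolding sincos_form_def by blast
qed

lemma sincos_form_prod:
  assumes "finite A" and "\<And>a. a \<in> A \<Longrightarrow> sincos_form (D a) (n a) (k a)"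
  shows "sincos_form (\<lambda>lam. \<Prod>a\<in>A. D a lam) (\<Sum>a\<in>A. n a) (\<Sum>a\<in>A. k a)"
  using assms
proof (induction A rule: finite_induct)
  case empty
  show ?case
    unfolding sincos_form_def sincos_fun_def by (intro exI[of _ 1]) (simp add: imag_sign_def)
next
  case (insert a A)
  then show ?case
    using sincos_form_mult[of "D a" "n a" "k a"] by simp
qed

lemma sincos_form_sum:
  assumes "finite A" and "A \<noteq> {}" and "\<And>a. a \<in> A \<Longrightarrow> sincos_form (D a) n k"
  shows "sincos_form (\<lambda>lam. \<Sum>a\<in>A. D a lam) n k"
  using assms
  by (induction A rule: finite_ne_induct) (simp_all add: sincos_form_add)

lemma sincos_form_single_edge:
  "sincos_form (if a then if b then S0 else S0' else if b then C0 else C0') 1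
     (1 - of_bool a - of_bool b)"
proof -
  have "sincos_form S0 1 (-1)"
    unfolding sincos_form_def sincos_fun_def
    by (intro exI[of _ 1]) (simp add: imag_sign_def S0_def power_int_minus field_simps)
  moreover have "sincos_form S0' 1 0" "sincos_form C0 1 0"
    unfolding sincos_form_def sincos_fun_def
    by (intro exI[of _ "[:0, 1:]"]; simp add: imag_sign_def S0'_def C0_def map_poly_pCons)+
  moreover have "sincos_form C0' 1 1"
    unfolding sincos_form_def sincos_fun_def
    by (intro exI[of _ "[:-1:]"]) (simp add: imag_sign_def C0'_def map_poly_pCons)
  ultimately show ?thesis
    by simp
qed

lemma bipoly_power_times_poly:
  fixes Q :: "real poly"
  assumes "Q \<noteq> 0" and "degree Q + e = n"
  defines "R \<equiv> \<lambda>i j. if i = e then coeff Q j else 0"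
  shows "bipoly_degree R n"
    and "bipoly_eval R n x y = x ^ e * poly (map_poly of_real Q) y"
proof -
  show "bipoly_degree R n"
    unfolding bipoly_degree_def R_def
  proof (intro conjI allI impI)
    show "i + j \<le> n" if "(if i = e then coeff Q j else 0) \<noteq> 0" for i j
      using that assms(2) le_degree[of Q j] by (simp split: if_splits)
    show "\<exists>i j. (if i = e then coeff Q j else 0) \<noteq> 0 \<and> i + j = n"
      using assms by (intro exI[of _ e] exI[of _ "degree Q"]) auto
  qed
  have "bipoly_eval R n x y =
      (\<Sum>i\<le>n. if i = e then \<Sum>j\<le>n. of_real (coeff Q j) * x ^ e * y ^ j else 0)"
    unfolding bipoly_eval_def R_def by (intro sum.cong) auto
  also have "\<dots> = x ^ e * (\<Sum>j\<le>n. of_real (coeff Q j) * y ^ j)"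
    using assms(2) by (simp add: sum_distrib_left algebra_simps)
  also have "(\<Sum>j\<le>n. of_real (coeff Q j) * y ^ j) = poly (map_poly of_real Q) y"
    unfolding poly_altdef using assms(2)
    by (intro sum.mono_neutral_cong_right) (auto simp: coeff_eq_0 coeff_map_poly degree_map_poly)
  finally show "bipoly_eval R n x y = x ^ e * poly (map_poly of_real Q) y" .
qed

section \<open>Trees given by lists of edges\<close>

context
  fixes src tgt :: "nat \<Rightarrow> 'v"
begin

definition verts :: "nat set \<Rightarrow> 'v set" where
  "verts E = src ` E \<union> tgt ` E"

definition adj :: "nat set \<Rightarrow> ('v \<times> 'v) set" where
  "adj E = {(src j, tgt j) | j. j \<in> E} \<union> {(tgt j, src j) | j. j \<in> E}"

definition edge_link :: "nat set \<Rightarrow> 'v set \<Rightarrow> (nat \<times> nat) set" where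
  "edge_link E X = {(a, b). a \<in> E \<and> b \<in> E \<and>
     (\<exists>w. w \<notin> X \<and> w \<in> {src a, tgt a} \<and> w \<in> {src b, tgt b})}"

definition dirichlet_verts :: "nat set \<Rightarrow> ('v \<Rightarrow> bool) \<Rightarrow> 'v set" where
  "dirichlet_verts E b = {v \<in> verts E. deg src tgt E v = 1 \<and> b v}"

(* Unlike the vertex count in is_tree, these properties pass to branches; the last one, saying
   that distinct edges at u lie in distinct branches at u, is monotone in E. *)
definition edge_tree :: "nat set \<Rightarrow> bool" where
  "edge_tree E \<longleftrightarrow> finite E \<and> (\<forall>j\<in>E. src j \<noteq> tgt j) \<and>
     (\<forall>a\<in>E. \<forall>a'\<in>E. (a, a') \<in> (edge_link E {})\<^sup>*) \<and>
     (\<forall>u. \<forall>j\<in>inc_edges src tgt E u. \<forall>j'\<in>inc_edges src tgt E u.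
        j' \<in> branch src tgt E u j \<longrightarrow> j' = j)"

lemma branch_iff: "k \<in> branch src tgt E u j \<longleftrightarrow> (j, k) \<in> (edge_link E {u})\<^sup>*"
  by (simp add: branch_def edge_link_def)

lemma edge_link_rtrancl_sym: "(a, b) \<in> (edge_link E X)\<^sup>* \<Longrightarrow> (b, a) \<in> (edge_link E X)\<^sup>*"
proof -
  have "sym (edge_link E X)"
    unfolding edge_link_def sym_def by blast
  then show "(a, b) \<in> (edge_link E X)\<^sup>* \<Longrightarrow> (b, a) \<in> (edge_link E X)\<^sup>*"
    using sym_rtrancl symD by metis
qed

lemma edge_link_rtrancl_mem: "(j, k) \<in> (edge_link E X)\<^sup>* \<Longrightarrow> k = j \<or> k \<in> E"
  by (induction rule: rtrancl_induct) (auto simp: edge_link_def)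

lemma branch_mono: "E \<subseteq> F \<Longrightarrow> branch src tgt E u j \<subseteq> branch src tgt F u j"
proof -
  assume "E \<subseteq> F"
  then have "edge_link E {u} \<subseteq> edge_link F {u}"
    unfolding edge_link_def by blast
  then have "(edge_link E {u})\<^sup>* \<subseteq> (edge_link F {u})\<^sup>*"
    by (rule rtrancl_mono)
  then show ?thesis
    by (auto simp: branch_iff)
qed

lemma adj_rtrancl_sym: "(a, b) \<in> (adj E)\<^sup>* \<Longrightarrow> (b, a) \<in> (adj E)\<^sup>*"
proof -
  have "sym (adj E)"
    unfolding adj_def sym_def by blast
  then show "(a, b) \<in> (adj E)\<^sup>* \<Longrightarrow> (b, a) \<in> (adj E)\<^sup>*"
    using sym_rtrancl symD by metis
qed

lemma adj_rtrancl_endpoints: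
  "e \<in> E \<Longrightarrow> a \<in> {src e, tgt e} \<Longrightarrow> b \<in> {src e, tgt e} \<Longrightarrow> (a, b) \<in> (adj E)\<^sup>*"
  unfolding adj_def by auto

lemma adjE:
  assumes "(a, b) \<in> adj E"
  obtains e where "e \<in> E" "a \<in> {src e, tgt e}" "b \<in> {src e, tgt e}"
  using assms unfolding adj_def by auto

lemma reachable_subset: "{v. (v0, v) \<in> (adj E)\<^sup>*} \<subseteq> insert v0 (verts E)"
proof
  fix v
  assume "v \<in> {v. (v0, v) \<in> (adj E)\<^sup>*}"
  then have "(v0, v) \<in> (adj E)\<^sup>*"
    by simp
  then show "v \<in> insert v0 (verts E)"
    by (cases rule: rtranclE) (auto elim!: adjE simp: verts_def)
qed

lemma finite_reachable: "finite E \<Longrightarrow> finite {v. (v0, v) \<in> (adj E)\<^sup>*}"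
  using reachable_subset by (rule finite_subset) (simp add: verts_def)

lemma card_reachable_le:
  assumes fin: "finite E"
  shows "card {v. (v0, v) \<in> (adj E)\<^sup>*} \<le> card E + 1"
proof -
  define A where "A = {v. (v0, v) \<in> (adj E)\<^sup>*}"
  define dist where "dist v = (LEAST n. (v0, v) \<in> adj E ^^ n)" for v
  have "\<exists>e\<in>E. \<exists>w. dist w < dist v \<and> {src e, tgt e} = {w, v}" if v: "v \<in> A - {v0}" for v
  proof -
    obtain n where "(v0, v) \<in> adj E ^^ n"
      using v rtrancl_power unfolding A_def by blast
    then have path: "(v0, v) \<in> adj E ^^ dist v"
      unfolding dist_def by (rule LeastI)
    then obtain n' where n': "dist v = Suc n'"
      using v by (cases "dist v") auto
    with path obtain w where w: "(v0, w) \<in> adj E ^^ n'" "(w, v) \<in> adj E"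
      by auto
    have "dist w < dist v"
      using Least_le[of "\<lambda>n. (v0, w) \<in> adj E ^^ n", OF w(1)] n' unfolding dist_def by simp
    with w(2) show ?thesis
      unfolding adj_def by blast
  qed
  then obtain parent where parent: "\<And>v. v \<in> A - {v0} \<Longrightarrow>
      parent v \<in> E \<and> (\<exists>w. dist w < dist v \<and> {src (parent v), tgt (parent v)} = {w, v})"
    by metis
  \<comment> \<open>Two vertices sharing a parent edge would each be closer to v0 than the other.\<close>
  have "inj_on parent (A - {v0})"
  proof (rule inj_onI, rule ccontr)
    fix v v'
    assume v: "v \<in> A - {v0}" and v': "v' \<in> A - {v0}" and "parent v = parent v'" "v \<noteq> v'"
    then obtain w w' where "dist w < dist v" "dist w' < dist v'" "{w, v} = {w', v'}"
      using parent[OF v] parent[OF v'] by metis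
    with \<open>v \<noteq> v'\<close> show False
      by (auto simp: doubleton_eq_iff)
  qed
  moreover have "parent ` (A - {v0}) \<subseteq> E"
    using parent by blast
  ultimately have "card (A - {v0}) \<le> card E"
    using card_inj_on_le fin by blast
  moreover have "finite A"
    unfolding A_def using fin by (rule finite_reachable)
  ultimately show ?thesis
    unfolding A_def[symmetric] by (simp add: card_Diff_singleton_if split: if_splits)
qed

lemma adj_rtrancl_Diff_edge:
  assumes "(src j, tgt j) \<in> (adj (E - {j}))\<^sup>*"
  shows "(adj E)\<^sup>* = (adj (E - {j}))\<^sup>*"
proof
  have "adj E \<subseteq> adj (E - {j}) \<union> {(src j, tgt j), (tgt j, src j)}"
    unfolding adj_def by blast
  also have "\<dots> \<subseteq> (adj (E - {j}))\<^sup>*"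
    using assms adj_rtrancl_sym by blast
  finally show "(adj E)\<^sup>* \<subseteq> (adj (E - {j}))\<^sup>*"
    by (rule rtrancl_subset_rtrancl)
  show "(adj (E - {j}))\<^sup>* \<subseteq> (adj E)\<^sup>*"
    by (rule rtrancl_mono) (auto simp: adj_def)
qed

lemma edge_link_of_adj_rtrancl:
  assumes "(v, w) \<in> (adj E)\<^sup>*" and "a \<in> E" "v \<in> {src a, tgt a}" and "b \<in> E" "w \<in> {src b, tgt b}"
  shows "(a, b) \<in> (edge_link E {})\<^sup>*"
  using assms(1,4,5)
proof (induction arbitrary: b rule: rtrancl_induct)
  case base
  then show ?case
    using assms(2,3) by (intro r_into_rtrancl) (auto simp: edge_link_def)
next
  case (step y z)
  from step.hyps(2) obtain e where e: "e \<in> E" "y \<in> {src e, tgt e}" "z \<in> {src e, tgt e}"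
    by (rule adjE)
  have "(a, e) \<in> (edge_link E {})\<^sup>*"
    using e(1,2) by (rule step.IH)
  moreover have "(e, b) \<in> edge_link E {}"
    using e step.prems unfolding edge_link_def by blast
  ultimately show ?case
    by (rule rtrancl_into_rtrancl)
qed

lemma edge_link_rtrancl_imp_reachable:
  assumes loop_free: "\<forall>j\<in>E. src j \<noteq> tgt j"
    and j: "u \<in> {src j, tgt j}" and j': "j' \<in> E - {j}" "u \<in> {src j', tgt j'}"
    and "(j', k) \<in> (edge_link E {u})\<^sup>*"
  shows "\<exists>w \<in> {src k, tgt k} - {u}. (u, w) \<in> (adj (E - {j}))\<^sup>*"
  using assms(5)
proof (induction rule: rtrancl_induct)
  case base
  let ?w = "if src j' = u then tgt j' else src j'"
  have "?w \<in> {src j', tgt j'} - {u}" "(u, ?w) \<in> (adj (E - {j}))\<^sup>*"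
    using j' loop_free by (auto intro!: adj_rtrancl_endpoints[of j'])
  then show ?case
    by blast
next
  case (step k k')
  then obtain w where w: "w \<in> {src k, tgt k} - {u}" "(u, w) \<in> (adj (E - {j}))\<^sup>*"
    by blast
  from step.hyps(2) obtain w' where w': "w' \<notin> {u}" "w' \<in> {src k, tgt k}" "w' \<in> {src k', tgt k'}"
    and "k \<in> E"
    unfolding edge_link_def by blast
  have "(w, w') \<in> (adj (E - {j}))\<^sup>*"
  proof (cases "k = j")
    case True
    with j w w' have "w = w'"
      by auto
    then show ?thesis
      by simp
  next
    case False
    with w w' \<open>k \<in> E\<close> show ?thesis
      by (intro adj_rtrancl_endpoints[of k]) auto
  qed
  with w w' show ?case
    by (meson Diff_iff rtrancl_trans)
qed

(* If j' were in the branch of j, the path from j' to j would reconnect the endpoints of j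
   without j, and the connected graph E - {j} would have too many vertices. *)
lemma branch_inc_edges_eq:
  assumes fin: "finite E" and loop_free: "\<forall>j\<in>E. src j \<noteq> tgt j"
    and card: "card (verts E) = card E + 1"
    and conn: "\<forall>v\<in>verts E. \<forall>w\<in>verts E. (v, w) \<in> (adj E)\<^sup>*"
    and j: "j \<in> inc_edges src tgt E u" and j': "j' \<in> inc_edges src tgt E u"
    and branch: "j' \<in> branch src tgt E u j"
  shows "j' = j"
proof (rule ccontr)
  assume "j' \<noteq> j"
  let ?A = "adj (E - {j})"
  have "(j', j) \<in> (edge_link E {u})\<^sup>*"
    using branch edge_link_rtrancl_sym by (simp add: branch_iff)
  moreover have "u \<in> {src j, tgt j}" "j' \<in> E - {j}" "u \<in> {src j', tgt j'}"
    using j j' \<open>j' \<noteq> j\<close> by (auto simp: inc_edges_def)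
  ultimately obtain w where "w \<in> {src j, tgt j} - {u}" "(u, w) \<in> ?A\<^sup>*"
    using edge_link_rtrancl_imp_reachable[OF loop_free] by blast
  with \<open>u \<in> {src j, tgt j}\<close> have "(src j, tgt j) \<in> ?A\<^sup>*"
    using adj_rtrancl_sym by auto
  then have "(adj E)\<^sup>* = ?A\<^sup>*"
    by (rule adj_rtrancl_Diff_edge)
  moreover have "u \<in> verts E"
    using j by (auto simp: inc_edges_def verts_def)
  ultimately have "verts E \<subseteq> {v. (u, v) \<in> ?A\<^sup>*}"
    using conn by blast
  then have "card (verts E) \<le> card {v. (u, v) \<in> ?A\<^sup>*}"
    using fin by (intro card_mono finite_reachable) auto
  also have "\<dots> \<le> card (E - {j}) + 1"
    using fin by (intro card_reachable_le) auto
  also have "\<dots> = card E"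
    using fin \<open>j' \<in> E - {j}\<close> j card_Suc_Diff1[of E j] by (simp add: inc_edges_def)
  finally show False
    using card by simp
qed

lemma edge_tree_of_is_tree:
  assumes "is_tree m src tgt"
  shows "edge_tree {..<m}"
proof -
  have verts: "tree_vertices m src tgt = verts {..<m}"
    by (simp add: tree_vertices_def verts_def)
  have adj: "{(src j, tgt j) | j. j < m} \<union> {(tgt j, src j) | j. j < m} = adj {..<m}"
    by (auto simp: adj_def)
  have conn: "\<forall>v\<in>verts {..<m}. \<forall>w\<in>verts {..<m}. (v, w) \<in> (adj {..<m})\<^sup>*"
    and card: "card (verts {..<m}) = card {..<m} + 1"
    and loop_free: "\<forall>j\<in>{..<m}. src j \<noteq> tgt j"
    using assms unfolding is_tree_def verts adj by simp_all
  have "(a, a') \<in> (edge_link {..<m} {})\<^sup>*" if "a \<in> {..<m}" "a' \<in> {..<m}" for a a'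
    using conn that by (intro edge_link_of_adj_rtrancl[of "src a" "src a'"]) (auto simp: verts_def)
  moreover have "j' = j"
    if "j \<in> inc_edges src tgt {..<m} u" "j' \<in> inc_edges src tgt {..<m} u"
      "j' \<in> branch src tgt {..<m} u j" for u j j'
    using finite_lessThan loop_free card conn that by (rule branch_inc_edges_eq)
  ultimately show ?thesis
    unfolding edge_tree_def using loop_free by blast
qed

end

section \<open>Splitting a tree at an internal vertex\<close>

locale tree_split =
  fixes src tgt :: "nat \<Rightarrow> 'v" and E :: "nat set" and u :: 'v
  assumes tree: "edge_tree src tgt E" and deg_u: "deg src tgt E u \<ge> 2"
begin

abbreviation J :: "nat set" where
  "J \<equiv> inc_edges src tgt E u"

abbreviation B :: "nat \<Rightarrow> nat set" where
  "B \<equiv> branch src tgt E u"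

lemma finite_inc_edges: "finite J"
  using tree unfolding edge_tree_def inc_edges_def by simp

lemma inc_edges_nonempty: "J \<noteq> {}"
  using deg_u unfolding deg_def by auto

lemma branch_self: "j \<in> B j"
  by (simp add: branch_iff)

lemma branch_subset: "j \<in> J \<Longrightarrow> B j \<subseteq> E"
  using edge_link_rtrancl_mem by (fastforce simp: branch_iff inc_edges_def)

lemma branch_closed: "k \<in> B j \<Longrightarrow> (k, k') \<in> edge_link src tgt E {u} \<Longrightarrow> k' \<in> B j"
  by (simp add: branch_iff)

lemma branch_unique:
  assumes "j \<in> J" "j' \<in> J" "k \<in> B j" "k \<in> B j'"
  shows "j = j'"
proof -
  have "(j, k) \<in> (edge_link src tgt E {u})\<^sup>*" "(k, j') \<in> (edge_link src tgt E {u})\<^sup>*"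
    using assms(3,4) edge_link_rtrancl_sym by (auto simp: branch_iff)
  then have "j' \<in> B j"
    by (simp add: branch_iff)
  then show ?thesis
    using assms(1,2) tree unfolding edge_tree_def by blast
qed

lemma branch_unique_vertex:
  assumes "j \<in> J" "j' \<in> J" "v \<in> verts src tgt (B j)" "v \<in> verts src tgt (B j')" "v \<noteq> u"
  shows "j = j'"
proof -
  obtain k k' where "k \<in> B j" "k' \<in> B j'" "v \<in> {src k, tgt k}" "v \<in> {src k', tgt k'}"
    using assms(3,4) unfolding verts_def by blast
  moreover have "k \<in> E" "k' \<in> E"
    using assms(1,2) \<open>k \<in> B j\<close> \<open>k' \<in> B j'\<close> branch_subset by blast+
  ultimately have "(k, k') \<in> edge_link src tgt E {u}"
    using assms(5) unfolding edge_link_def by blast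
  with \<open>k \<in> B j\<close> have "k' \<in> B j"
    by (rule branch_closed)
  with assms(1,2) \<open>k' \<in> B j'\<close> show ?thesis
    using branch_unique by blast
qed

lemma Union_branches: "(\<Union>j\<in>J. B j) = E"
proof
  show "(\<Union>j\<in>J. B j) \<subseteq> E"
    using branch_subset by blast
  obtain j0 where j0: "j0 \<in> J"
    using inc_edges_nonempty by blast
  have "k \<in> (\<Union>j\<in>J. B j)" if "(j0, k) \<in> (edge_link src tgt E {})\<^sup>*" for k
    using that
  proof (induction rule: rtrancl_induct)
    case base
    then show ?case
      using j0 branch_self by blast
  next
    case (step k k')
    then obtain j where j: "j \<in> J" "k \<in> B j"
      by blast
    from step.hyps(2) obtain w where w: "w \<in> {src k, tgt k}" "w \<in> {src k', tgt k'}" "k' \<in> E"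
      unfolding edge_link_def by blast
    show ?case
    proof (cases "w = u")
      case True
      then have "k' \<in> J"
        using w by (auto simp: inc_edges_def)
      then show ?thesis
        using branch_self by blast
    next
      case False
      then have "(k, k') \<in> edge_link src tgt E {u}"
        using w step.hyps(2) unfolding edge_link_def by blast
      then show ?thesis
        using j branch_closed by blast
    qed
  qed
  then show "E \<subseteq> (\<Union>j\<in>J. B j)"
    using tree j0 unfolding edge_tree_def inc_edges_def by blast
qed

lemma card_eq_sum_branches: "card E = (\<Sum>j\<in>J. card (B j))"
proof -
  have "finite (B j)" if "j \<in> J" for j
    using tree branch_subset[OF that] finite_subset unfolding edge_tree_def by blast
  then have "card (\<Union>j\<in>J. B j) = (\<Sum>j\<in>J. card (B j))"
    using finite_inc_edges branch_unique by (intro card_UN_disjoint) auto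
  then show ?thesis
    by (simp add: Union_branches)
qed

lemma inc_edges_branch_center: "j \<in> J \<Longrightarrow> inc_edges src tgt (B j) u = {j}"
  using branch_subset branch_self branch_unique unfolding inc_edges_def by blast

lemma inc_edges_branch:
  assumes "j \<in> J" "v \<in> verts src tgt (B j)" "v \<noteq> u"
  shows "inc_edges src tgt (B j) v = inc_edges src tgt E v"
proof
  show "inc_edges src tgt (B j) v \<subseteq> inc_edges src tgt E v"
    using branch_subset[OF assms(1)] unfolding inc_edges_def by blast
  obtain k where k: "k \<in> B j" "v \<in> {src k, tgt k}"
    using assms(2) unfolding verts_def by blast
  have "k' \<in> B j" if "k' \<in> inc_edges src tgt E v" for k'
  proof -
    have "(k, k') \<in> edge_link src tgt E {u}"
      using that k assms branch_subset unfolding edge_link_def inc_edges_def by blast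
    with k(1) show ?thesis
      by (rule branch_closed)
  qed
  then show "inc_edges src tgt E v \<subseteq> inc_edges src tgt (B j) v"
    unfolding inc_edges_def by blast
qed

lemma edge_tree_branch:
  assumes "j \<in> J"
  shows "edge_tree src tgt (B j)"
proof -
  have "(j, k) \<in> (edge_link src tgt (B j) {})\<^sup>*" if "(j, k) \<in> (edge_link src tgt E {u})\<^sup>*" for k
    using that
  proof (induction rule: rtrancl_induct)
    case (step k k')
    then have "(k, k') \<in> edge_link src tgt (B j) {}"
      by (auto simp: edge_link_def branch_iff intro: rtrancl_into_rtrancl)
    with step.IH show ?case
      by (rule rtrancl_into_rtrancl)
  qed simp
  then have "(a, a') \<in> (edge_link src tgt (B j) {})\<^sup>*" if "a \<in> B j" "a' \<in> B j" for a a'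
    using that edge_link_rtrancl_sym unfolding branch_iff by (meson rtrancl_trans)
  moreover have "B j \<subseteq> E"
    using assms by (rule branch_subset)
  moreover have "inc_edges src tgt (B j) w \<subseteq> inc_edges src tgt E w" for w
    using \<open>B j \<subseteq> E\<close> unfolding inc_edges_def by blast
  ultimately show ?thesis
    unfolding edge_tree_def
  proof (intro conjI)
    show "finite (B j)" "\<forall>k\<in>B j. src k \<noteq> tgt k"
      using tree \<open>B j \<subseteq> E\<close> finite_subset unfolding edge_tree_def by blast+
    show "\<forall>w. \<forall>i\<in>inc_edges src tgt (B j) w. \<forall>i'\<in>inc_edges src tgt (B j) w.
        i' \<in> branch src tgt (B j) w i \<longrightarrow> i' = i"
    proof (intro allI ballI impI)
      fix w i i'
      assume "i \<in> inc_edges src tgt (B j) w" "i' \<in> inc_edges src tgt (B j) w"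
        "i' \<in> branch src tgt (B j) w i"
      moreover have "branch src tgt (B j) w i \<subseteq> branch src tgt E w i"
        using \<open>B j \<subseteq> E\<close> by (rule branch_mono)
      ultimately have "i \<in> inc_edges src tgt E w" "i' \<in> inc_edges src tgt E w"
        "i' \<in> branch src tgt E w i"
        using \<open>inc_edges src tgt (B j) w \<subseteq> _\<close> by blast+
      then show "i' = i"
        using tree unfolding edge_tree_def by blast
    qed
  qed blast
qed

lemma dirichlet_verts_branch:
  assumes "j \<in> J"
  shows "dirichlet_verts src tgt (B j) (b(u := c)) =
    dirichlet_verts src tgt E b \<inter> (verts src tgt (B j) - {u}) \<union> (if c then {u} else {})"
proof -
  have "u \<in> verts src tgt (B j)"
    using assms branch_self by (auto simp: verts_def inc_edges_def)
  moreover have "deg src tgt (B j) u = 1"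
    using inc_edges_branch_center[OF assms] by (simp add: deg_def)
  moreover have "deg src tgt (B j) v = deg src tgt E v" if "v \<in> verts src tgt (B j)" "v \<noteq> u" for v
    using inc_edges_branch[OF assms that] by (simp add: deg_def)
  moreover have "verts src tgt (B j) \<subseteq> verts src tgt E"
    using branch_subset[OF assms] by (auto simp: verts_def)
  ultimately show ?thesis
    unfolding dirichlet_verts_def by auto
qed

lemma card_dirichlet_verts:
  "card (dirichlet_verts src tgt E b) =
    (\<Sum>j\<in>J. card (dirichlet_verts src tgt E b \<inter> (verts src tgt (B j) - {u})))"
proof -
  have "verts src tgt E = (\<Union>j\<in>J. verts src tgt (B j))"
    using Union_branches unfolding verts_def by blast
  moreover have "u \<notin> dirichlet_verts src tgt E b"
    using deg_u by (simp add: dirichlet_verts_def)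
  ultimately have "dirichlet_verts src tgt E b =
      (\<Union>j\<in>J. dirichlet_verts src tgt E b \<inter> (verts src tgt (B j) - {u}))"
    unfolding dirichlet_verts_def by blast
  moreover have "card (\<Union>j\<in>J. dirichlet_verts src tgt E b \<inter> (verts src tgt (B j) - {u})) =
      (\<Sum>j\<in>J. card (dirichlet_verts src tgt E b \<inter> (verts src tgt (B j) - {u})))"
  proof (rule card_UN_disjoint[OF finite_inc_edges])
    show "\<forall>j\<in>J. finite (dirichlet_verts src tgt E b \<inter> (verts src tgt (B j) - {u}))"
      using tree unfolding edge_tree_def dirichlet_verts_def verts_def by simp
    show "\<forall>j\<in>J. \<forall>j'\<in>J. j \<noteq> j' \<longrightarrow>
        (dirichlet_verts src tgt E b \<inter> (verts src tgt (B j) - {u})) \<inter>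
        (dirichlet_verts src tgt E b \<inter> (verts src tgt (B j') - {u})) = {}"
      using branch_unique_vertex by blast
  qed
  ultimately show ?thesis
    by simp
qed

end

lemma sincos_form_char0:
  assumes "char0 src tgt E b D" and "edge_tree src tgt E"
  shows "sincos_form D (card E) (1 - int (card (dirichlet_verts src tgt E b)))"
  using assms
proof (induction rule: char0.induct)
  case (single j b)
  then have "src j \<noteq> tgt j"
    unfolding edge_tree_def by simp
  have "deg src tgt {j} v = 1" if "v \<in> {src j, tgt j}" for v
  proof -
    have "inc_edges src tgt {j} v = {j}"
      using that by (auto simp: inc_edges_def)
    then show ?thesis
      by (simp add: deg_def)
  qed
  then have "dirichlet_verts src tgt {j} b = {v \<in> {src j, tgt j}. b v}"
    unfolding dirichlet_verts_def verts_def by auto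
  also have "\<dots> = (if b (src j) then {src j} else {}) \<union> (if b (tgt j) then {tgt j} else {})"
    by auto
  finally have "card (dirichlet_verts src tgt {j} b) = of_bool (b (src j)) + of_bool (b (tgt j))"
    using \<open>src j \<noteq> tgt j\<close> by simp
  then show ?case
    using sincos_form_single_edge[of "b (src j)" "b (tgt j)"]
    by (cases "b (src j)"; cases "b (tgt j)") simp_all
next
  case (split E u b DD DN)
  interpret tree_split src tgt E u
    using split.prems split.hyps(1) by unfold_locales
  define n where "n j = card (dirichlet_verts src tgt E b \<inter> (verts src tgt (B j) - {u}))" for j
  have branch_forms: "sincos_form (DD j) (card (B j)) (- int (n j)) \<and>
      sincos_form (DN j) (card (B j)) (1 - int (n j))" if j: "j \<in> J" for j
  proof -
    have "card (dirichlet_verts src tgt (B j) (b(u := c))) = n j + of_bool c" for c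
      unfolding dirichlet_verts_branch[OF j] n_def
      using split.prems unfolding edge_tree_def dirichlet_verts_def verts_def
      by (auto simp: card_insert_if)
    moreover have
      "sincos_form (DD j) (card (B j)) (1 - int (card (dirichlet_verts src tgt (B j) (b(u := True)))))"
      "sincos_form (DN j) (card (B j))
         (1 - int (card (dirichlet_verts src tgt (B j) (b(u := False)))))"
      using split.IH j edge_tree_branch[OF j] unfolding fun_upd_def by blast+
    ultimately show ?thesis
      by simp
  qed
  have "sincos_form (\<lambda>lam. DN j lam * (\<Prod>k\<in>J - {j}. DD k lam)) (card E) (1 - int (\<Sum>j\<in>J. n j))"
    if j: "j \<in> J" for j
  proof -
    have "sincos_form (\<lambda>lam. DN j lam * (\<Prod>k\<in>J - {j}. DD k lam))
        (card (B j) + (\<Sum>k\<in>J - {j}. card (B k)))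
        ((1 - int (n j)) + (\<Sum>k\<in>J - {j}. - int (n k)))"
      using branch_forms j finite_inc_edges
      by (intro sincos_form_mult sincos_form_prod) auto
    moreover have "card (B j) + (\<Sum>k\<in>J - {j}. card (B k)) = card E"
      using card_eq_sum_branches finite_inc_edges j
      by (simp add: sum.remove)
    moreover have "(1 - int (n j)) + (\<Sum>k\<in>J - {j}. - int (n k)) = 1 - int (\<Sum>j\<in>J. n j)"
      using finite_inc_edges j by (simp add: sum.remove sum_negf)
    ultimately show ?thesis
      by simp
  qed
  then show ?case
    using finite_inc_edges inc_edges_nonempty card_dirichlet_verts
    by (simp add: n_def sincos_form_sum)
qed

theorem lemma1:
  fixes m :: nat and src tgt :: "nat \<Rightarrow> 'v" and BC :: "'v \<Rightarrow> bool"
    and \<Delta>0 :: "complex \<Rightarrow> complex"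
  assumes "is_tree m src tgt"
    and "char0 src tgt {..<m} BC \<Delta>0"
  defines "d \<equiv> card {v \<in> tree_vertices m src tgt. deg src tgt {..<m} v = 1 \<and> BC v}"
  shows "\<exists>(R :: nat \<Rightarrow> nat \<Rightarrow> real) (Q :: real poly).
           bipoly_degree R m \<and>
           degree Q = (if even d then m - 1 else m) \<and>
           (\<forall>z. poly Q z = (-1) ^ degree Q * poly Q (- z)) \<and>
           (\<forall>lam::complex. lam \<noteq> 0 \<longrightarrow>
              (let \<rho> = csqrt lam in
                \<Delta>0 lam = \<rho> powi (1 - int d) * bipoly_eval R m (sin (\<rho> * pi)) (cos (\<rho> * pi)) \<and>
                bipoly_eval R m (sin (\<rho> * pi)) (cos (\<rho> * pi)) =
                  (if even d then sin (\<rho> * pi) * poly (map_poly of_real Q) (cos (\<rho> * pi))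
                   else poly (map_poly of_real Q) (cos (\<rho> * pi)))))"
proof -
  have "d = card (dirichlet_verts src tgt {..<m} BC)"
    unfolding d_def dirichlet_verts_def tree_vertices_def verts_def by simp
  moreover have "edge_tree src tgt {..<m}"
    using assms(1) by (rule edge_tree_of_is_tree)
  ultimately have "sincos_form \<Delta>0 m (1 - int d)"
    using sincos_form_char0[OF assms(2)] by simp
  then obtain Q where deg: "degree Q + of_bool (even d) = m"
    and reflect: "\<forall>z. poly Q z = (-1) ^ degree Q * poly Q (- z)"
    and lead: "lead_coeff Q * imag_sign (1 - int d) > 0"
    and \<Delta>0: "\<And>lam. lam \<noteq> 0 \<Longrightarrow> \<Delta>0 lam = sincos_fun (1 - int d) Q lam"
    unfolding sincos_form_def by auto
  from lead have "Q \<noteq> 0"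
    by auto
  define R where "R = (\<lambda>i j. if i = (of_bool (even d) :: nat) then coeff Q j else 0 :: real)"
  have R: "bipoly_degree R m"
    "bipoly_eval R m x y = x ^ of_bool (even d) * poly (map_poly of_real Q) y" for x y
    using bipoly_power_times_poly[OF \<open>Q \<noteq> 0\<close> deg] unfolding R_def by blast+
  show ?thesis
  proof (intro exI[of _ R] exI[of _ Q] conjI allI impI)
    show "bipoly_degree R m"
      by (rule R(1))
    show "poly Q z = (-1) ^ degree Q * poly Q (- z)" for z
      using reflect by blast
    show "degree Q = (if even d then m - 1 else m)"
      using deg by auto
    show "let \<rho> = csqrt lam in
        \<Delta>0 lam = \<rho> powi (1 - int d) * bipoly_eval R m (sin (\<rho> * pi)) (cos (\<rho> * pi)) \<and>
        bipoly_eval R m (sin (\<rho> * pi)) (cos (\<rho> * pi)) =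
          (if even d then sin (\<rho> * pi) * poly (map_poly of_real Q) (cos (\<rho> * pi))
           else poly (map_poly of_real Q) (cos (\<rho> * pi)))" if "lam \<noteq> 0" for lam
      using \<Delta>0[OF that] unfolding Let_def R(2) sincos_fun_def by simp
  qed
qed

end
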